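(* Let $G$ be a finite simple graph. If $x$ is a maximum cost construction sequence for $G$ (i.e. $\nu(x)=\nu^*(G)$), then $x$ is easy.
   Context: For a finite simple graph $G=(V,E)$ with $\ell=|V|+|E|$, a construction sequence (c-sequence) is a bijection $x:\{1,\dots,\ell\}\to V\sqcup E$ such that every edge $e=uw$ satisfies $x^{-1}(e)>\max\{x^{-1}(u),x^{-1}(w)\}$. The cost of $x$ is $\nu(x)=\sum_{e=uw\in E}\big(2x^{-1}(e)-x^{-1}(u)-x^{-1}(w)\big)$, and $\nu^*(G)$ is the maximum of $\nu(x)$ over all c-sequences for $G$. A c-sequence is easy if no edge precedes a vertex. *)

theory Defs
  imports Main
begin

definition simple_graph :: "'a set \<Rightarrow> 'a set set \<Rightarrow> bool" where
  "simple_graph V E \<longleftrightarrow> finite V \<and>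
     (\<forall>e\<in>E. \<exists>u w. e = {u, w} \<and> u \<noteq> w \<and> u \<in> V \<and> w \<in> V)"

definition elems :: "'a set \<Rightarrow> 'a set set \<Rightarrow> ('a + 'a set) set" where
  "elems V E = Inl ` V \<union> Inr ` E"

definition len :: "'a set \<Rightarrow> 'a set set \<Rightarrow> nat" where
  "len V E = card V + card E"

definition pos :: "'a set \<Rightarrow> 'a set set \<Rightarrow> (nat \<Rightarrow> 'a + 'a set) \<Rightarrow> ('a + 'a set) \<Rightarrow> nat" where
  "pos V E x a = inv_into {1..len V E} x a"

definition cseq :: "'a set \<Rightarrow> 'a set set \<Rightarrow> (nat \<Rightarrow> 'a + 'a set) \<Rightarrow> bool" where
  "cseq V E x \<longleftrightarrow> bij_betw x {1..len V E} (elems V E) \<and>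
     (\<forall>e\<in>E. \<forall>u\<in>e. pos V E x (Inl u) < pos V E x (Inr e))"

definition cost :: "'a set \<Rightarrow> 'a set set \<Rightarrow> (nat \<Rightarrow> 'a + 'a set) \<Rightarrow> int" where
  "cost V E x = (\<Sum>e\<in>E. 2 * int (pos V E x (Inr e)) - (\<Sum>u\<in>e. int (pos V E x (Inl u))))"

definition max_cost :: "'a set \<Rightarrow> 'a set set \<Rightarrow> int" where
  "max_cost V E = Max (cost V E ` {x. cseq V E x})"

definition easy :: "'a set \<Rightarrow> 'a set set \<Rightarrow> (nat \<Rightarrow> 'a + 'a set) \<Rightarrow> bool" where
  "easy V E x \<longleftrightarrow> (\<forall>v\<in>V. \<forall>e\<in>E. pos V E x (Inl v) < pos V E x (Inr e))"

end

theory Submission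
  imports Defs "HOL-Combinatorics.Transposition"
begin

text \<open>If an edge \<open>e\<close> precedes a vertex \<open>v\<close> in \<open>x\<close>, swap the two entries. Only \<open>v\<close> and \<open>e\<close>
  move, \<open>v\<close> to an earlier and \<open>e\<close> to a later position. Moving vertices earlier and edges later
  preserves the c-sequence condition, does not decrease any term \<open>2 x\<inverse>(f) - x\<inverse>(u) - x\<inverse>(w)\<close> of
  the cost, and strictly increases the term of \<open>e\<close>; so \<open>x\<close> was not of maximum cost.\<close>

lemma simple_graph_edge_subset:
  assumes "simple_graph V E" "e \<in> E"
  shows "e \<subseteq> V"
  using assms unfolding simple_graph_def by fastforce

lemma simple_graph_edge_card:
  assumes "simple_graph V E" "e \<in> E"
  shows "card e = 2"
  using assms unfolding simple_graph_def by fastforce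

lemma simple_graph_finite_edges:
  assumes "simple_graph V E"
  shows "finite E"
proof (rule finite_subset)
  show "E \<subseteq> Pow V" using simple_graph_edge_subset[OF assms] by blast
  show "finite (Pow V)" using assms by (simp add: simple_graph_def)
qed

lemma pos_in_range:
  assumes "bij_betw x {1..len V E} (elems V E)" "a \<in> elems V E"
  shows "pos V E x a \<in> {1..len V E}"
proof -
  have "a \<in> x ` {1..len V E}" using assms by (simp add: bij_betw_def)
  then show ?thesis unfolding pos_def by (rule inv_into_into)
qed

lemma apply_pos:
  assumes "bij_betw x {1..len V E} (elems V E)" "a \<in> elems V E"
  shows "x (pos V E x a) = a"
proof -
  have "a \<in> x ` {1..len V E}" using assms by (simp add: bij_betw_def)
  then show ?thesis unfolding pos_def by (rule f_inv_into_f)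
qed

lemma pos_eq_iff:
  assumes "bij_betw x {1..len V E} (elems V E)" "a \<in> elems V E" "b \<in> elems V E"
  shows "pos V E x a = pos V E x b \<longleftrightarrow> a = b"
  using apply_pos[OF assms(1)] assms(2,3) by metis

lemma pos_eqI:
  assumes "bij_betw x {1..len V E} (elems V E)" "j \<in> {1..len V E}" "x j = a"
  shows "pos V E x a = j"
  using assms unfolding pos_def bij_betw_def by (blast intro: inv_into_f_eq)

lemma bij_betw_comp_transpose:
  assumes "bij_betw x {1..len V E} (elems V E)" "p \<in> {1..len V E}" "q \<in> {1..len V E}"
  shows "bij_betw (x \<circ> transpose p q) {1..len V E} (elems V E)"
  using assms by (intro bij_betw_trans[of _ _ "{1..len V E}"]) auto

lemma pos_comp_transpose:
  assumes "bij_betw x {1..len V E} (elems V E)" "p \<in> {1..len V E}" "q \<in> {1..len V E}"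
    and "a \<in> elems V E"
  shows "pos V E (x \<circ> transpose p q) a = transpose p q (pos V E x a)"
proof (rule pos_eqI[OF bij_betw_comp_transpose[OF assms(1-3)]])
  show "transpose p q (pos V E x a) \<in> {1..len V E}"
    using pos_in_range[OF assms(1,4)] assms(2,3) by (simp add: transpose_def)
  show "(x \<circ> transpose p q) (transpose p q (pos V E x a)) = a"
    using apply_pos[OF assms(1,4)] by simp
qed

definition vertices_earlier_edges_later ::
    "'a set \<Rightarrow> 'a set set \<Rightarrow> (nat \<Rightarrow> 'a + 'a set) \<Rightarrow> (nat \<Rightarrow> 'a + 'a set) \<Rightarrow> bool" where
  "vertices_earlier_edges_later V E x y \<longleftrightarrow>
     (\<forall>u\<in>V. pos V E y (Inl u) \<le> pos V E x (Inl u)) \<and>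
     (\<forall>e\<in>E. pos V E x (Inr e) \<le> pos V E y (Inr e))"

lemma cseq_if_vertices_earlier_edges_later:
  assumes "simple_graph V E" "cseq V E x" "bij_betw y {1..len V E} (elems V E)"
    and "vertices_earlier_edges_later V E x y"
  shows "cseq V E y"
  unfolding cseq_def
proof (intro conjI ballI assms(3))
  fix e u assume e: "e \<in> E" and u: "u \<in> e"
  then have "u \<in> V" using simple_graph_edge_subset[OF assms(1)] by blast
  then have "pos V E y (Inl u) \<le> pos V E x (Inl u)"
    using assms(4) by (simp add: vertices_earlier_edges_later_def)
  also have "\<dots> < pos V E x (Inr e)" using assms(2) e u by (simp add: cseq_def)
  also have "\<dots> \<le> pos V E y (Inr e)"
    using assms(4) e by (simp add: vertices_earlier_edges_later_def)
  finally show "pos V E y (Inl u) < pos V E y (Inr e)" .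
qed

lemma cost_less_if_vertices_earlier_edges_later:
  assumes "simple_graph V E" "vertices_earlier_edges_later V E x y"
    and "e \<in> E" "pos V E x (Inr e) < pos V E y (Inr e)"
  shows "cost V E x < cost V E y"
proof -
  have vertices: "(\<Sum>u\<in>f. int (pos V E y (Inl u))) \<le> (\<Sum>u\<in>f. int (pos V E x (Inl u)))"
    if "f \<in> E" for f
    using assms(2) simple_graph_edge_subset[OF assms(1) that]
    by (intro sum_mono) (auto simp: vertices_earlier_edges_later_def)
  have edges: "pos V E x (Inr f) \<le> pos V E y (Inr f)" if "f \<in> E" for f
    using assms(2) that by (simp add: vertices_earlier_edges_later_def)
  show ?thesis
    unfolding cost_def
  proof (rule sum_strict_mono_ex1[OF simple_graph_finite_edges[OF assms(1)]])
    show "\<forall>f\<in>E. 2 * int (pos V E x (Inr f)) - (\<Sum>u\<in>f. int (pos V E x (Inl u)))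
        \<le> 2 * int (pos V E y (Inr f)) - (\<Sum>u\<in>f. int (pos V E y (Inl u)))"
      using vertices edges by fastforce
    show "\<exists>f\<in>E. 2 * int (pos V E x (Inr f)) - (\<Sum>u\<in>f. int (pos V E x (Inl u)))
        < 2 * int (pos V E y (Inr f)) - (\<Sum>u\<in>f. int (pos V E y (Inl u)))"
      using vertices[OF assms(3)] assms(3,4) by force
  qed
qed

lemma swap_edge_before_vertex:
  assumes "cseq V E x" "e \<in> E" "v \<in> V" "pos V E x (Inr e) < pos V E x (Inl v)"
  defines "y \<equiv> x \<circ> transpose (pos V E x (Inr e)) (pos V E x (Inl v))"
  shows "bij_betw y {1..len V E} (elems V E)"
    and "vertices_earlier_edges_later V E x y"
    and "pos V E x (Inr e) < pos V E y (Inr e)"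
proof -
  let ?p = "pos V E x (Inr e)" and ?q = "pos V E x (Inl v)"
  have bij: "bij_betw x {1..len V E} (elems V E)" using assms(1) by (simp add: cseq_def)
  have elems: "Inr e \<in> elems V E" "Inl v \<in> elems V E" using assms(2,3) by (auto simp: elems_def)
  have range: "?p \<in> {1..len V E}" "?q \<in> {1..len V E}"
    using pos_in_range[OF bij] elems by auto
  show "bij_betw y {1..len V E} (elems V E)"
    unfolding y_def using bij_betw_comp_transpose[OF bij range] .
  have pos_y: "pos V E y a = transpose ?p ?q (pos V E x a)" if "a \<in> elems V E" for a
    unfolding y_def using pos_comp_transpose[OF bij range that] .
  show "pos V E x (Inr e) < pos V E y (Inr e)"
    using pos_y[OF elems(1)] assms(4) by simp
  show "vertices_earlier_edges_later V E x y"
    unfolding vertices_earlier_edges_later_def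
  proof (intro conjI ballI)
    fix u assume "u \<in> V"
    then have "Inl u \<in> elems V E" by (simp add: elems_def)
    then show "pos V E y (Inl u) \<le> pos V E x (Inl u)"
      using pos_y pos_eq_iff[OF bij _ elems(1)] pos_eq_iff[OF bij _ elems(2)] assms(4)
      by (cases "u = v") (auto simp: transpose_def)
  next
    fix f assume "f \<in> E"
    then have "Inr f \<in> elems V E" by (simp add: elems_def)
    then show "pos V E x (Inr f) \<le> pos V E y (Inr f)"
      using pos_y pos_eq_iff[OF bij _ elems(1)] pos_eq_iff[OF bij _ elems(2)] assms(4)
      by (cases "f = e") (auto simp: transpose_def)
  qed
qed

lemma abs_cost_le:
  assumes "simple_graph V E" "bij_betw x {1..len V E} (elems V E)"
  shows "\<bar>cost V E x\<bar> \<le> int (4 * card E * len V E)"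
proof -
  have "\<bar>cost V E x\<bar> \<le> (\<Sum>e\<in>E. \<bar>2 * int (pos V E x (Inr e)) - (\<Sum>u\<in>e. int (pos V E x (Inl u)))\<bar>)"
    unfolding cost_def by (rule sum_abs)
  also have "\<dots> \<le> (\<Sum>e\<in>E. int (4 * len V E))"
  proof (rule sum_mono)
    fix e assume e: "e \<in> E"
    have pos_le: "pos V E x a \<le> len V E" if "a \<in> elems V E" for a
      using pos_in_range[OF assms(2) that] by simp
    have "Inl u \<in> elems V E" if "u \<in> e" for u
      using simple_graph_edge_subset[OF assms(1) e] that by (auto simp: elems_def)
    then have "(\<Sum>u\<in>e. int (pos V E x (Inl u))) \<le> (\<Sum>u\<in>e. int (len V E))"
      using pos_le by (intro sum_mono) simp
    also have "\<dots> = 2 * int (len V E)"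
      using simple_graph_edge_card[OF assms(1) e] by simp
    finally have "(\<Sum>u\<in>e. int (pos V E x (Inl u))) \<le> 2 * int (len V E)" .
    moreover have "pos V E x (Inr e) \<le> len V E"
      using pos_le e by (simp add: elems_def)
    moreover have "0 \<le> (\<Sum>u\<in>e. int (pos V E x (Inl u)))"
      by (simp add: sum_nonneg)
    ultimately show "\<bar>2 * int (pos V E x (Inr e)) - (\<Sum>u\<in>e. int (pos V E x (Inl u)))\<bar>
        \<le> int (4 * len V E)"
      by linarith
  qed
  finally show ?thesis by simp
qed

lemma cost_le_max_cost:
  assumes "simple_graph V E" "cseq V E x"
  shows "cost V E x \<le> max_cost V E"
proof -
  let ?B = "int (4 * card E * len V E)"
  have "cost V E ` {x. cseq V E x} \<subseteq> {-?B..?B}"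
  proof
    fix c assume "c \<in> cost V E ` {x. cseq V E x}"
    then obtain y where "cseq V E y" "c = cost V E y" by blast
    then have "\<bar>c\<bar> \<le> ?B" using abs_cost_le[OF assms(1)] by (simp add: cseq_def)
    then show "c \<in> {-?B..?B}" by (simp add: abs_le_iff)
  qed
  then have "finite (cost V E ` {x. cseq V E x})"
    by (rule finite_subset) simp
  then show ?thesis
    unfolding max_cost_def using assms(2) by (intro Max_ge) auto
qed

theorem lemma2:
  fixes V :: "'a set" and E :: "'a set set" and x :: "nat \<Rightarrow> 'a + 'a set"
  assumes "simple_graph V E"
    and "cseq V E x"
    and "cost V E x = max_cost V E"
  shows "easy V E x"
proof (rule ccontr)
  assume "\<not> easy V E x"
  then obtain v e where "v \<in> V" "e \<in> E" and "pos V E x (Inr e) \<le> pos V E x (Inl v)"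
    unfolding easy_def by (auto simp: not_less)
  moreover have "pos V E x (Inr e) \<noteq> pos V E x (Inl v)"
    using assms(2) \<open>v \<in> V\<close> \<open>e \<in> E\<close> by (simp add: pos_eq_iff cseq_def elems_def)
  ultimately have edge_first: "pos V E x (Inr e) < pos V E x (Inl v)" by simp
  define y where "y = x \<circ> transpose (pos V E x (Inr e)) (pos V E x (Inl v))"
  note swap = swap_edge_before_vertex[OF assms(2) \<open>e \<in> E\<close> \<open>v \<in> V\<close>
      edge_first, folded y_def]
  have "cost V E x < cost V E y"
    using cost_less_if_vertices_earlier_edges_later[OF assms(1) swap(2) \<open>e \<in> E\<close> swap(3)] .
  also have "\<dots> \<le> max_cost V E"
    using cost_le_max_cost[OF assms(1) cseq_if_vertices_earlier_edges_later[OF assms(1,2) swap(1,2)]] .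
  finally show False using assms(3) by simp
qed

end
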